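(* Let $\pi$ be the algebra morphism from $\mathbb K\langle\langle A'\rangle\rangle$ to $\mathbb K\langle\langle X\rangle\rangle$, $X=\{x_1<x_2<\cdots\}$, defined by $a_{ij}\mapsto x_j$, and view it as a linear map on $\mathbf H_o$ via $\mathcal F\mapsto\pi(S'^{\mathcal F})$. Then for every ordered forest $\mathcal F$ on $[n]$, $$\pi(S'^{\mathcal F})=\sum_{u}\mathbf M_u,$$ the sum over packed words $u=u_1\cdots u_n$ such that $u_k<u_l$ whenever $k$ is the parent of $l$ in $\mathcal F$. Moreover $\pi(\mathbf H_o)=\mathbf{WQSym}$, and $\pi:\mathbf H_o\to\mathbf{WQSym}$ is a surjective morphism of Hopf algebras; thus $\mathbf{WQSym}$ is a quotient Hopf algebra of $\mathbf H_o$.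
   Context: An ordered forest on $n$ vertices is a rooted forest whose vertex set is $[n]$ with its natural order (labels unrelated to the tree structure), given by its roots and parent map. $\mathbf H_o$ is the Hopf algebra with basis the ordered forests, product = disjoint union with the second forest's labels shifted, coproduct by admissible cuts $\Delta(\mathcal F)=\sum_V\mathrm{Roo}_V\mathcal F\otimes\mathrm{Lea}_V\mathcal F$ (an admissible cut is an antichain $V$ for the descendant relation; $\mathrm{Lea}_V\mathcal F$ is the induced, order-standardized subforest on $V$ and its descendants, $\mathrm{Roo}_V\mathcal F$ that on the complement). Second realization: $A'=\{a_{ij}:1\le i\le j\}$, with $a_{hi}\prec a_{ij}$ whenever $h\le i<j$; a word $w_1\cdots w_n$ over $A'$ is $\mathcal F$-compatible if $w_k$ is a diagonal letter $a_{ii}$ for each root $k$ and $w_k\prec w_l$ whenever $k$ is the parent of $l$; $S'^{\mathcal F}$ is the sum of all $\mathcal F$-compatible words; the map $\mathcal F\mapsto S'^{\mathcal F}$ realizes $\mathbf H_o$ (product and coproduct, the latter through the $\prec$-sum $A'\oplus B'$ in which additionally $a\prec b_{ii}$ for all $a\in A'$). A word over positive integers is packed if the set of its letters is $\{1,\dots,m\}$ for some $m$; $\mathrm{pack}(w)$ replaces the $r$-th smallest letter of $w$ by $r$. Identifying $x_i$ with $i$, $\mathbf M_u=\sum_{\mathrm{pack}(w)=u}w$ for packed $u$. $\mathbf{WQSym}$ is the span of the $\mathbf M_u$, with ordinary product and coproduct $\Delta\mathbf M_u=\sum_{k=0}^{m}\mathbf M_{u_{|[1,k]}}\otimes\mathbf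 M_{\mathrm{pack}(u_{|[k+1,m]})}$, where $m=\max(u)$ and $u_{|J}$ is the subword of letters in $J$ (equivalently, $\Delta F=F(X\oplus Y)$ for the ordinal sum $X<Y$). *)

theory Defs
  imports Complex_Main "HOL-Library.Function_Algebras"
begin

text \<open>An ordered forest on [n] is a pair (n, par), where par k = Some p means that p is the
parent of vertex k, and par k = None means that k is a root (for k in {1..n});
outside {1..n} par is None (normalisation, so that equal forests are equal pairs).\<close>

type_synonym forest = "nat \<times> (nat \<Rightarrow> nat option)"

definition edges :: "(nat \<Rightarrow> nat option) \<Rightarrow> (nat \<times> nat) set" where
  "edges par = {(p, c). par c = Some p}"

definition is_oforest :: "forest \<Rightarrow> bool" where
  "is_oforest F \<longleftrightarrow>
     (let n = fst F; par = snd F in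
       (\<forall>k. k \<notin> {1..n} \<longrightarrow> par k = None) \<and>
       (\<forall>k p. par k = Some p \<longrightarrow> p \<in> {1..n}) \<and>
       acyclic (edges par))"

definition empty_forest :: forest where
  "empty_forest = (0, \<lambda>_. None)"

text \<open>Product of H_o: disjoint union, the labels of the second forest shifted.\<close>
definition forest_prod :: "forest \<Rightarrow> forest \<Rightarrow> forest" where
  "forest_prod F G = (fst F + fst G,
     \<lambda>k. if 1 \<le> k \<and> k \<le> fst F then snd F k
         else if fst F < k \<and> k \<le> fst F + fst G then map_option (\<lambda>x. x + fst F) (snd G (k - fst F))
         else None)"

text \<open>Descendant relation: l is a (proper) descendant of k iff (k,l) in (edges par)^+.\<close>
definition admissible_cut :: "forest \<Rightarrow> nat set \<Rightarrow> bool" where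
  "admissible_cut F V \<longleftrightarrow> V \<subseteq> {1..fst F} \<and>
     (\<forall>k\<in>V. \<forall>l\<in>V. (k, l) \<notin> (edges (snd F))\<^sup>+)"

definition desc_closure :: "forest \<Rightarrow> nat set \<Rightarrow> nat set" where
  "desc_closure F V = {l. \<exists>v\<in>V. (v, l) \<in> (edges (snd F))\<^sup>*}"

text \<open>Induced, order-standardized subforest on a vertex set S \<subseteq> [n]:
  the vertex of rank j in S becomes vertex j; a vertex keeps its parent if the parent
  lies in S, otherwise it becomes a root.\<close>
definition rank :: "nat set \<Rightarrow> nat \<Rightarrow> nat" where
  "rank S k = card {x \<in> S. x \<le> k}"

definition induced_std :: "forest \<Rightarrow> nat set \<Rightarrow> forest" where
  "induced_std F S = (card S,
     \<lambda>j. if 1 \<le> j \<and> j \<le> card S then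
           (let k = sorted_list_of_set S ! (j - 1) in
             (case snd F k of None \<Rightarrow> None
              | Some p \<Rightarrow> if p \<in> S then Some (rank S p) else None))
         else None)"

definition Lea :: "forest \<Rightarrow> nat set \<Rightarrow> forest" where
  "Lea F V = induced_std F (desc_closure F V)"

definition Roo :: "forest \<Rightarrow> nat set \<Rightarrow> forest" where
  "Roo F V = induced_std F ({1..fst F} - desc_closure F V)"

text \<open>Letters of A' are pairs (i,j) standing for a_ij with 1 \<le> i \<le> j; letters of X
  are positive integers (x_i identified with i). A series is the function giving the
  coefficient of each word. Tensor squares of series are functions of two words.\<close>

definition A'_letter :: "nat \<times> nat \<Rightarrow> bool" where
  "A'_letter a \<longleftrightarrow> 1 \<le> fst a \<and> fst a \<le> snd a"

text \<open>a_hi \<prec> a_ij whenever h \<le> i < j.\<close>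
definition prec :: "nat \<times> nat \<Rightarrow> nat \<times> nat \<Rightarrow> bool" where
  "prec a b \<longleftrightarrow> snd a = fst b \<and> fst a \<le> snd a \<and> fst b < snd b"

definition compatible :: "forest \<Rightarrow> (nat \<times> nat) list \<Rightarrow> bool" where
  "compatible F w \<longleftrightarrow> length w = fst F \<and> (\<forall>a\<in>set w. A'_letter a) \<and>
     (\<forall>k\<in>{1..fst F}. snd F k = None \<longrightarrow> fst (w ! (k - 1)) = snd (w ! (k - 1))) \<and>
     (\<forall>k l. snd F l = Some k \<longrightarrow> prec (w ! (k - 1)) (w ! (l - 1)))"

text \<open>S'^F: the sum of all F-compatible words.\<close>
definition S' :: "forest \<Rightarrow> (nat \<times> nat) list \<Rightarrow> 'k::field" where
  "S' F w = (if compatible F w then 1 else 0)"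

text \<open>The algebra morphism pi : a_ij \<mapsto> x_j, on series over A'.\<close>
definition pi_ser :: "((nat \<times> nat) list \<Rightarrow> 'k::field) \<Rightarrow> nat list \<Rightarrow> 'k" where
  "pi_ser f w = (\<Sum>v\<in>{v. map snd v = w \<and> (\<forall>a\<in>set v. A'_letter a)}. f v)"

definition piH :: "forest \<Rightarrow> nat list \<Rightarrow> 'k::field" where
  "piH F = pi_ser (S' F)"

definition ser_mult :: "(nat list \<Rightarrow> 'k::field) \<Rightarrow> (nat list \<Rightarrow> 'k) \<Rightarrow> nat list \<Rightarrow> 'k" where
  "ser_mult f g w = (\<Sum>i\<le>length w. f (take i w) * g (drop i w))"

definition ser_one :: "nat list \<Rightarrow> 'k::field" where
  "ser_one w = (if w = [] then 1 else 0)"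

definition ser_scale :: "'k::field \<Rightarrow> (nat list \<Rightarrow> 'k) \<Rightarrow> nat list \<Rightarrow> 'k" where
  "ser_scale c f = (\<lambda>w. c * f w)"

definition packed :: "nat list \<Rightarrow> bool" where
  "packed u \<longleftrightarrow> set u = {1..card (set u)}"

definition pack :: "nat list \<Rightarrow> nat list" where
  "pack w = map (\<lambda>x. card {y \<in> set w. y \<le> x}) w"

definition M :: "nat list \<Rightarrow> nat list \<Rightarrow> 'k::field" where
  "M u w = (if (\<forall>x\<in>set w. 1 \<le> x) \<and> pack w = u then 1 else 0)"

definition WQSym :: "(nat list \<Rightarrow> 'k::field) set" where
  "WQSym = module.span ser_scale {M u | u. packed u}"

definition restr :: "nat list \<Rightarrow> nat set \<Rightarrow> nat list" where
  "restr u J = filter (\<lambda>x. x \<in> J) u"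

text \<open>Coproduct of M_u, as an element of WQSym \<otimes> WQSym, realised as a function
  of pairs of words (M_u \<otimes> M_v \<mapsto> (w1,w2) \<mapsto> M_u w1 * M_v w2).\<close>
definition coprod_M :: "nat list \<Rightarrow> nat list \<Rightarrow> nat list \<Rightarrow> 'k::field" where
  "coprod_M u w1 w2 = (\<Sum>k\<le>Max (insert 0 (set u)).
      M (restr u {1..k}) w1 * M (pack (restr u {k+1..Max (insert 0 (set u))})) w2)"

text \<open>Coproduct on WQSym, extended linearly: an element f of WQSym equals
  \<Sum>_u f(u) M_u (sum over the finitely many packed u with f u \<noteq> 0).\<close>
definition wqsym_coprod :: "(nat list \<Rightarrow> 'k::field) \<Rightarrow> nat list \<Rightarrow> nat list \<Rightarrow> 'k" where
  "wqsym_coprod f w1 w2 = (\<Sum>u\<in>{u. packed u \<and> f u \<noteq> 0}. f u * coprod_M u w1 w2)"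

definition wqsym_counit :: "(nat list \<Rightarrow> 'k::field) \<Rightarrow> 'k" where
  "wqsym_counit f = f []"

text \<open>(pi \<otimes> pi)(\<Delta> F) for the coproduct of H_o by admissible cuts.\<close>
definition piH_coprod :: "forest \<Rightarrow> nat list \<Rightarrow> nat list \<Rightarrow> 'k::field" where
  "piH_coprod F w1 w2 = (\<Sum>V\<in>{V. admissible_cut F V}. piH (Roo F V) w1 * piH (Lea F V) w2)"

definition forest_words :: "forest \<Rightarrow> nat list set" where
  "forest_words F = {u. packed u \<and> length u = fst F \<and>
       (\<forall>k l. snd F l = Some k \<longrightarrow> u ! (k - 1) < u ! (l - 1))}"

end

theory Submission
  imports Defs
begin

text \<open>
  Call a word w over positive integers F-increasing if it has length n and its letter at a
  vertex is smaller than its letter at every child.  The key observation is that every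
  F-increasing word w has exactly one F-compatible preimage under pi (the letter at vertex l
  must be a_{ij} with j = w_l and i = w_k for the parent k of l, or i = j at a root), and no
  other word has one.  Hence pi(S'^F) is the indicator series of the F-increasing words.
  Since comparisons between letters are invariant under packing, these are exactly the
  words w with pack w in forest_words F, which is the formula for pi(S'^F) in terms of M_u.

  Unit, counit and multiplicativity follow directly from this indicator description.
  For the span, every packed u is the componentwise smallest word of forest_words of a
  canonical forest attached to u, so M_u lies in the span of the pi(S'^F) by induction on
  the sum of the letters (a triangularity argument).  For the coproduct, admissible cuts
  correspond bijectively to descendant-closed vertex sets, and both sides of the coproduct
  identity count the same objects: a word u of forest_words F contributing M_{u1} (x) M_{u2}
  is the same as a descendant-closed set S (the positions of the large letters of u)
  together with increasing words on the two induced subforests.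
\<close>

lemma sum_fun_apply: "finite A \<Longrightarrow> (\<Sum>x\<in>A. f x) w = (\<Sum>x\<in>A. f x w)"
  by (induction A rule: finite_induct) auto

lemma sum_indicator:
  "finite A \<Longrightarrow> (\<Sum>x\<in>A. if P x then 1 else (0::'k::field)) = of_nat (card {x\<in>A. P x})"
  by (simp add: sum.inter_filter[symmetric])

lemma module_ser_scale: "module (ser_scale :: 'k::field \<Rightarrow> (nat list \<Rightarrow> 'k) \<Rightarrow> _)"
  by unfold_locales (auto simp: ser_scale_def fun_eq_iff algebra_simps)

section \<open>pi(S'^F) is the indicator of the F-increasing words\<close>

text \<open>Parents and children of a forest are vertices in [n]; this is all we need of
  the forest axioms for the characterisation of pi(S'^F).\<close>
definition parents_in_range :: "forest \<Rightarrow> bool" where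
  "parents_in_range F \<longleftrightarrow> (\<forall>k l. snd F l = Some k \<longrightarrow> k \<in> {1..fst F} \<and> l \<in> {1..fst F})"

definition increasing_word :: "forest \<Rightarrow> nat list \<Rightarrow> bool" where
  "increasing_word F w \<longleftrightarrow> length w = fst F \<and> (\<forall>x\<in>set w. 1 \<le> x) \<and>
     (\<forall>k l. snd F l = Some k \<longrightarrow> w!(k-1) < w!(l-1))"

lemma oforest_parents_in_range: "is_oforest F \<Longrightarrow> parents_in_range F"
  unfolding is_oforest_def parents_in_range_def Let_def by (metis option.distinct(1))

text \<open>A word over X has only finitely many preimages under pi, so pi is well defined.\<close>
lemma finite_pi_preimages: "finite {v. map snd v = w \<and> (\<forall>a\<in>set v. A'_letter a)}"
proof -
  let ?B = "{0..Max (insert 0 (set w))}"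
  have "{v. map snd v = w \<and> (\<forall>a\<in>set v. A'_letter a)} \<subseteq> {v. set v \<subseteq> ?B \<times> ?B \<and> length v = length w}"
  proof (rule subsetI)
    fix v assume "v \<in> {v. map snd v = w \<and> (\<forall>a\<in>set v. A'_letter a)}"
    hence v: "map snd v = w" "\<forall>a\<in>set v. A'_letter a" by auto
    have "a \<in> ?B \<times> ?B" if "a \<in> set v" for a
    proof -
      have "snd a \<le> Max (insert 0 (set w))" using that v(1) by auto
      moreover have "fst a \<le> snd a" using v that by (auto simp: A'_letter_def)
      ultimately show ?thesis by (cases a) auto
    qed
    thus "v \<in> {v. set v \<subseteq> ?B \<times> ?B \<and> length v = length w}" using v(1) by auto
  qed
  moreover have "finite {v. set v \<subseteq> ?B \<times> ?B \<and> length v = length w}"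
    by (rule finite_lists_length_eq) auto
  ultimately show ?thesis by (rule finite_subset)
qed

definition compatible_lift :: "forest \<Rightarrow> nat list \<Rightarrow> (nat \<times> nat) list" where
  "compatible_lift F w =
     map (\<lambda>i. (case snd F (Suc i) of None \<Rightarrow> w!i | Some k \<Rightarrow> w!(k-1), w!i)) [0..<length w]"

lemma compatible_lift_nth:
  "i < length w \<Longrightarrow>
   compatible_lift F w ! i = (case snd F (Suc i) of None \<Rightarrow> w!i | Some k \<Rightarrow> w!(k-1), w!i)"
  by (simp add: compatible_lift_def split: option.split)

lemma length_compatible_lift [simp]: "length (compatible_lift F w) = length w"
  by (simp add: compatible_lift_def)

lemma compatible_preimage_is_lift:
  assumes F: "parents_in_range F"
    and v: "map snd v = w" "\<forall>a\<in>set v. A'_letter a" "compatible F v"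
  shows "v = compatible_lift F w \<and> increasing_word F w"
proof -
  have len: "length v = fst F" "length w = fst F" using v by (auto simp: compatible_def)
  have snd_v: "snd (v!i) = w!i" if "i < length v" for i using v that by auto
  have parent_idx: "k - 1 < length v" "l - 1 < length v" if "snd F l = Some k" for k l
    using F that len unfolding parents_in_range_def by fastforce+
  have edge: "prec (v!(k-1)) (v!(l-1))" if "snd F l = Some k" for k l
    using v(3) that unfolding compatible_def by blast
  have fst_v: "fst (v!i) = (case snd F (Suc i) of None \<Rightarrow> w!i | Some k \<Rightarrow> w!(k-1))"
    if i: "i < length v" for i
  proof (cases "snd F (Suc i)")
    case None
    moreover have "Suc i \<in> {1..fst F}" using i len by auto
    ultimately have "fst (v ! (Suc i - 1)) = snd (v ! (Suc i - 1))"
      using v(3) unfolding compatible_def by blast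
    hence "fst (v ! i) = snd (v ! i)" by simp
    then show ?thesis using None snd_v[OF i] by simp
  next
    case (Some k)
    then show ?thesis using edge[OF Some] parent_idx[OF Some] snd_v by (simp add: prec_def)
  qed
  have "v = compatible_lift F w"
  proof (rule nth_equalityI)
    show "length v = length (compatible_lift F w)" using v(1) by auto
    fix i assume i: "i < length v"
    hence "i < length w" using v(1) by auto
    thus "v ! i = compatible_lift F w ! i"
      using compatible_lift_nth fst_v[OF i] snd_v[OF i] by (metis prod.collapse)
  qed
  moreover have "increasing_word F w"
    unfolding increasing_word_def
  proof (intro conjI allI impI ballI)
    show "length w = fst F" by (rule len(2))
  next
    fix x assume "x \<in> set w"
    then obtain a where "a \<in> set v" "x = snd a" using v(1) by auto
    then show "1 \<le> x" using v(2) by (auto simp: A'_letter_def)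
  next
    fix k l assume e: "snd F l = Some k"
    show "w!(k-1) < w!(l-1)" using edge[OF e] parent_idx[OF e] snd_v by (simp add: prec_def)
  qed
  ultimately show ?thesis by simp
qed

lemma compatible_lift_compatible:
  assumes F: "parents_in_range F" and w: "increasing_word F w"
  shows "map snd (compatible_lift F w) = w \<and> (\<forall>a\<in>set (compatible_lift F w). A'_letter a)
         \<and> compatible F (compatible_lift F w)"
proof -
  let ?v = "compatible_lift F w"
  have len: "length w = fst F" using w by (simp add: increasing_word_def)
  have pos: "i < length w \<Longrightarrow> 1 \<le> w!i" for i using w by (auto simp: increasing_word_def)
  have parent_idx: "k - 1 < length w" "l - 1 < length w" "Suc (l - 1) = l"
    if "snd F l = Some k" for k l using F that len unfolding parents_in_range_def by fastforce+
  have edge: "w!(k-1) < w!(l-1)" if "snd F l = Some k" for k l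
    using w that unfolding increasing_word_def by blast
  have letter: "A'_letter (?v ! i)" if "i < length w" for i
  proof (cases "snd F (Suc i)")
    case None thus ?thesis using that pos[OF that] by (simp add: compatible_lift_def A'_letter_def)
  next
    case (Some k)
    thus ?thesis using that pos[OF parent_idx(1)[OF Some]] edge[OF Some]
      by (simp add: compatible_lift_def A'_letter_def)
  qed
  have letter_mem: "A'_letter a" if a: "a \<in> set ?v" for a
  proof -
    obtain i where "i < length ?v" "?v ! i = a" using a by (auto simp: in_set_conv_nth)
    then show "A'_letter a" using letter by auto
  qed
  show ?thesis
    unfolding compatible_def
  proof (intro conjI allI impI ballI)
    show "map snd ?v = w" by (rule nth_equalityI) (simp_all add: compatible_lift_nth)
    show "length ?v = fst F" using len by simp
  next
    fix k assume k: "k \<in> {1..fst F}" "snd F k = None"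
    hence "k - 1 < length w" "Suc (k - 1) = k" using len by auto
    then show "fst (?v ! (k - 1)) = snd (?v ! (k - 1))"
      using compatible_lift_nth[of "k-1" w F] k(2) by simp
  next
    fix k l assume e: "snd F l = Some k"
    note idx = parent_idx[OF e]
    have "?v ! (l - 1) = (w!(k-1), w!(l-1))" using compatible_lift_nth[OF idx(2), of F] idx(3) e by simp
    moreover have "snd (?v ! (k - 1)) = w!(k-1)" using compatible_lift_nth[OF idx(1), of F] by simp
    moreover have "fst (?v ! (k - 1)) \<le> snd (?v ! (k - 1))"
      using letter[OF idx(1)] by (simp add: A'_letter_def)
    ultimately show "prec (?v ! (k - 1)) (?v ! (l - 1))"
      unfolding prec_def using edge[OF e] by simp
  qed (simp_all add: letter_mem)
qed

lemma compatible_preimages: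
  assumes "parents_in_range F"
  shows "{v. map snd v = w \<and> (\<forall>a\<in>set v. A'_letter a) \<and> compatible F v}
         = (if increasing_word F w then {compatible_lift F w} else {})"
  using compatible_preimage_is_lift[OF assms] compatible_lift_compatible[OF assms] by auto

theorem piH_indicator:
  assumes "parents_in_range F"
  shows "(piH F w :: 'k::field) = (if increasing_word F w then 1 else 0)"
proof -
  let ?P = "{v. map snd v = w \<and> (\<forall>a\<in>set v. A'_letter a)}"
  have "(piH F w :: 'k) = (\<Sum>v\<in>?P. if compatible F v then 1 else 0)"
    by (simp add: piH_def pi_ser_def S'_def)
  also have "\<dots> = (\<Sum>v\<in>{v\<in>?P. compatible F v}. 1)"
    by (rule sum.inter_filter[OF finite_pi_preimages, symmetric])
  also have "{v\<in>?P. compatible F v} = (if increasing_word F w then {compatible_lift F w} else {})"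
    using compatible_preimages[OF assms, of w] by auto
  finally show ?thesis by simp
qed

section \<open>Packing\<close>

lemma rank_less_iff:
  fixes A :: "nat set"
  assumes "finite A" "x \<in> A" "y \<in> A"
  shows "rank A x < rank A y \<longleftrightarrow> x < y"
proof
  assume "x < y"
  hence "{z\<in>A. z \<le> x} \<subseteq> {z\<in>A. z \<le> y}" "y \<in> {z\<in>A. z \<le> y}" "y \<notin> {z\<in>A. z \<le> x}"
    using assms by auto
  hence "{z\<in>A. z \<le> x} \<subset> {z\<in>A. z \<le> y}" by blast
  thus "rank A x < rank A y" unfolding rank_def using assms(1) by (intro psubset_card_mono) auto
next
  assume less: "rank A x < rank A y"
  show "x < y"
  proof (rule ccontr)
    assume "\<not> x < y"
    hence "{z\<in>A. z \<le> y} \<subseteq> {z\<in>A. z \<le> x}" by auto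
    hence "rank A y \<le> rank A x" unfolding rank_def using assms(1) by (intro card_mono) auto
    thus False using less by simp
  qed
qed

lemma inj_on_rank: "finite (A::nat set) \<Longrightarrow> inj_on (rank A) A"
  by (rule inj_onI) (metis rank_less_iff linorder_neqE_nat less_irrefl)

lemma rank_image:
  fixes A :: "nat set"
  assumes "finite A"
  shows "rank A ` A = {1..card A}"
proof (rule card_subset_eq)
  show "rank A ` A \<subseteq> {1..card A}"
  proof
    fix y assume "y \<in> rank A ` A"
    then obtain x where x: "x \<in> A" "y = rank A x" by auto
    have "{z\<in>A. z \<le> x} \<noteq> {}" using x by auto
    hence "rank A x \<ge> 1" using assms by (simp add: rank_def Suc_le_eq card_gt_0_iff)
    moreover have "rank A x \<le> card A" unfolding rank_def using assms by (intro card_mono) auto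
    ultimately show "y \<in> {1..card A}" using x by auto
  qed
  show "card (rank A ` A) = card {1..card A}"
    using card_image[OF inj_on_rank[OF assms]] by simp
qed (simp)

lemma pack_rank: "pack w = map (rank (set w)) w"
  by (simp add: pack_def rank_def)

lemma length_pack [simp]: "length (pack w) = length w"
  by (simp add: pack_def)

lemma pack_nth: "i < length w \<Longrightarrow> pack w ! i = rank (set w) (w!i)"
  by (simp add: pack_rank)

lemma set_pack: "set (pack w) = {1..card (set w)}"
  unfolding pack_rank using rank_image[of "set w"] by simp

lemma packed_pack: "packed (pack w)"
  by (simp add: packed_def set_pack)

lemma pack_less_iff:
  "i < length w \<Longrightarrow> j < length w \<Longrightarrow> pack w ! i < pack w ! j \<longleftrightarrow> w!i < w!j"
  by (simp add: pack_nth rank_less_iff)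

lemma packedE:
  assumes "packed u"
  obtains c where "set u = {1..c}" "card (set u) = c"
  using assms unfolding packed_def by (metis card_atLeastAtMost diff_Suc_1)

lemma packedI: "set u = {1..c} \<Longrightarrow> packed u"
  unfolding packed_def by simp

lemma packed_pos: "packed u \<Longrightarrow> x \<in> set u \<Longrightarrow> 1 \<le> x"
  by (metis packedE atLeastAtMost_iff)

lemma pack_packed: "packed u \<Longrightarrow> pack u = u"
proof -
  assume "packed u"
  then obtain c where c: "set u = {1..c}" by (rule packedE)
  have "rank (set u) x = x" if "x \<in> set u" for x
  proof -
    have "{y\<in>set u. y \<le> x} = {1..x}" using that unfolding c by auto
    thus ?thesis by (simp add: rank_def)
  qed
  thus ?thesis unfolding pack_rank by (intro map_idI) simp
qed

lemma pack_strict_mono: "strict_mono (f::nat\<Rightarrow>nat) \<Longrightarrow> pack (map f w) = pack w"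
proof -
  assume f: "strict_mono f"
  have "card {y\<in>f ` set w. y \<le> f x} = card {y\<in>set w. y \<le> x}" for x
  proof -
    have "{y\<in>f ` set w. y \<le> f x} = f ` {y\<in>set w. y \<le> x}"
      using f by (auto simp: strict_mono_less_eq)
    moreover have "inj f" using f by (rule strict_mono_imp_inj_on)
    ultimately show ?thesis by (simp add: card_image inj_on_subset)
  qed
  thus ?thesis unfolding pack_def by simp
qed

lemma interval_word_shift_pack:
  assumes z: "set z = {a+1..b}"
  shows "z = map (\<lambda>x. x + a) (pack z)"
proof -
  let ?z' = "map (\<lambda>x. x - a) z"
  have letters: "a + 1 \<le> x" if "x \<in> set z" for x using z that by auto
  have z_shift: "z = map (\<lambda>x. x + a) ?z'"
    by (rule nth_equalityI) (auto dest!: letters[OF nth_mem])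
  have "set ?z' = (\<lambda>x. x - a) ` {a+1..b}" using z by simp
  also have "\<dots> = {1..b - a}"
  proof
    show "{1..b - a} \<subseteq> (\<lambda>x. x - a) ` {a + 1..b}"
    proof
      fix y assume "y \<in> {1..b-a}"
      hence "y + a \<in> {a+1..b}" "y = (y + a) - a" by auto
      thus "y \<in> (\<lambda>x. x - a) ` {a + 1..b}" by blast
    qed
  qed auto
  finally have "packed ?z'" by (rule packedI)
  have "pack z = pack ?z'" by (subst z_shift) (rule pack_strict_mono, simp add: strict_mono_def)
  also have "\<dots> = ?z'" by (rule pack_packed[OF \<open>packed ?z'\<close>])
  finally show ?thesis using z_shift by simp
qed

section \<open>The image of a forest in terms of the M_u\<close>

lemma finite_forest_words: "finite (forest_words F)"
proof -
  have "forest_words F \<subseteq> {u. set u \<subseteq> {0..fst F} \<and> length u = fst F}"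
  proof
    fix u assume "u \<in> forest_words F"
    hence u: "packed u" "length u = fst F" by (auto simp: forest_words_def)
    obtain c where c: "set u = {1..c}" "card (set u) = c" using u(1) by (rule packedE)
    have "c \<le> fst F" using card_length[of u] u c by simp
    thus "u \<in> {u. set u \<subseteq> {0..fst F} \<and> length u = fst F}" using u c by auto
  qed
  moreover have "finite {u. set u \<subseteq> {0..fst F} \<and> length u = fst F}"
    by (rule finite_lists_length_eq) simp
  ultimately show ?thesis by (rule finite_subset)
qed

lemma increasing_word_iff_pack:
  assumes F: "parents_in_range F"
  shows "increasing_word F w \<longleftrightarrow> (\<forall>x\<in>set w. 1 \<le> x) \<and> pack w \<in> forest_words F"
proof -
  have "pack w ! (k-1) < pack w ! (l-1) \<longleftrightarrow> w!(k-1) < w!(l-1)"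
    if "length w = fst F" "snd F l = Some k" for k l
  proof -
    have "k - 1 < length w" "l - 1 < length w"
      using F that unfolding parents_in_range_def by fastforce+
    thus ?thesis by (rule pack_less_iff)
  qed
  thus ?thesis unfolding forest_words_def increasing_word_def using packed_pack[of w] by auto
qed

lemma forest_word_increasing:
  assumes "parents_in_range F" "u \<in> forest_words F"
  shows "increasing_word F u"
proof -
  have "packed u" using assms(2) by (simp add: forest_words_def)
  thus ?thesis
    using increasing_word_iff_pack[OF assms(1)] assms(2) pack_packed packed_pos by metis
qed

theorem piH_eq_sum_M:
  assumes "is_oforest F"
  shows "(piH F :: nat list \<Rightarrow> 'k::field) = (\<lambda>w. \<Sum>u\<in>forest_words F. M u w)"
proof
  fix w :: "nat list"
  have F: "parents_in_range F" using assms by (rule oforest_parents_in_range)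
  let ?pos = "\<forall>x\<in>set w. 1 \<le> x"
  have "(\<Sum>u\<in>forest_words F. (M u w :: 'k))
        = (\<Sum>u\<in>forest_words F. if pack w = u then (if ?pos then 1 else 0) else 0)"
    by (rule sum.cong) (auto simp: M_def)
  also have "\<dots> = (if pack w \<in> forest_words F then (if ?pos then 1 else 0) else 0)"
    by (rule sum.delta'[OF finite_forest_words])
  also have "\<dots> = (if increasing_word F w then 1 else 0)"
    using increasing_word_iff_pack[OF F, of w] by auto
  finally show "(piH F w :: 'k) = (\<Sum>u\<in>forest_words F. M u w)"
    using piH_indicator[OF F, of w, where 'k='k] by simp
qed

lemma piH_sum_M:
  assumes "is_oforest F"
  shows "(piH F :: nat list \<Rightarrow> 'k::field) = (\<Sum>u\<in>forest_words F. M u)"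
  unfolding piH_eq_sum_M[OF assms] by (simp add: fun_eq_iff sum_fun_apply[OF finite_forest_words])

section \<open>Unit, counit and product\<close>

text \<open>Only the empty word is increasing for the empty forest, so pi maps the unit to 1.\<close>
theorem piH_empty_forest: "(piH empty_forest :: nat list \<Rightarrow> 'k::field) = ser_one"
proof
  fix w :: "nat list"
  have F: "parents_in_range empty_forest" by (simp add: parents_in_range_def empty_forest_def)
  have "increasing_word empty_forest w \<longleftrightarrow> w = []"
    by (auto simp: increasing_word_def empty_forest_def)
  thus "(piH empty_forest w :: 'k) = ser_one w"
    using piH_indicator[OF F, of w, where 'k='k] by (simp add: ser_one_def)
qed

theorem counit_piH:
  assumes "is_oforest F"
  shows "wqsym_counit (piH F :: nat list \<Rightarrow> 'k::field) = (if fst F = 0 then 1 else 0)"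
proof -
  have F: "parents_in_range F" using assms by (rule oforest_parents_in_range)
  have "increasing_word F [] \<longleftrightarrow> fst F = 0"
  proof
    assume "fst F = 0"
    hence "snd F l \<noteq> Some k" for k l using F unfolding parents_in_range_def by force
    thus "increasing_word F []" using \<open>fst F = 0\<close> by (auto simp: increasing_word_def)
  qed (auto simp: increasing_word_def)
  thus ?thesis unfolding wqsym_counit_def using piH_indicator[OF F, of "[]", where 'k='k] by simp
qed

lemma forest_prod_parent_cases:
  assumes "snd (forest_prod F G) l = Some k"
  shows "(1 \<le> l \<and> l \<le> fst F \<and> snd F l = Some k) \<or>
         (fst F < l \<and> l \<le> fst F + fst G \<and> (\<exists>k'. snd G (l - fst F) = Some k' \<and> k = k' + fst F))"
  using assms by (auto simp: forest_prod_def split: if_splits)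

lemma forest_prod_parent_left:
  "parents_in_range F \<Longrightarrow> snd F l = Some k \<Longrightarrow> snd (forest_prod F G) l = Some k"
  unfolding parents_in_range_def forest_prod_def by auto

lemma forest_prod_parent_right:
  "parents_in_range G \<Longrightarrow> snd G l = Some k \<Longrightarrow> snd (forest_prod F G) (l + fst F) = Some (k + fst F)"
  unfolding parents_in_range_def forest_prod_def by auto

lemma parents_in_range_forest_prod:
  assumes F: "parents_in_range F" and G: "parents_in_range G"
  shows "parents_in_range (forest_prod F G)"
  unfolding parents_in_range_def
proof (intro allI impI)
  fix k l assume e: "snd (forest_prod F G) l = Some k"
  have n: "fst (forest_prod F G) = fst F + fst G" by (simp add: forest_prod_def)
  from forest_prod_parent_cases[OF e]
  show "k \<in> {1..fst (forest_prod F G)} \<and> l \<in> {1..fst (forest_prod F G)}"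
  proof
    assume "1 \<le> l \<and> l \<le> fst F \<and> snd F l = Some k"
    thus ?thesis using F n unfolding parents_in_range_def by fastforce
  next
    assume "fst F < l \<and> l \<le> fst F + fst G \<and> (\<exists>k'. snd G (l - fst F) = Some k' \<and> k = k' + fst F)"
    thus ?thesis using G n unfolding parents_in_range_def by fastforce
  qed
qed

lemma increasing_word_forest_prodD:
  assumes F: "parents_in_range F" and G: "parents_in_range G"
    and inc: "increasing_word (forest_prod F G) w"
  shows "length w = fst F + fst G \<and> increasing_word F (take (fst F) w)
         \<and> increasing_word G (drop (fst F) w)"
proof -
  have len: "length w = fst F + fst G" using inc by (simp add: increasing_word_def forest_prod_def)
  have pos: "\<forall>x\<in>set w. 1 \<le> x" using inc by (simp add: increasing_word_def)
  have edge: "snd (forest_prod F G) l = Some k \<Longrightarrow> w!(k-1) < w!(l-1)" for k l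
    using inc by (simp add: increasing_word_def)
  have "increasing_word F (take (fst F) w)"
    unfolding increasing_word_def
  proof (intro conjI allI impI ballI)
    show "length (take (fst F) w) = fst F" using len by simp
    show "1 \<le> x" if "x \<in> set (take (fst F) w)" for x using pos that by (meson in_set_takeD)
    fix k l assume e: "snd F l = Some k"
    hence "k - 1 < fst F" "l - 1 < fst F" using F unfolding parents_in_range_def by fastforce+
    thus "take (fst F) w ! (k - 1) < take (fst F) w ! (l - 1)"
      using edge[OF forest_prod_parent_left[OF F e]] by simp
  qed
  moreover have "increasing_word G (drop (fst F) w)"
    unfolding increasing_word_def
  proof (intro conjI allI impI ballI)
    show "length (drop (fst F) w) = fst G" using len by simp
    show "1 \<le> x" if "x \<in> set (drop (fst F) w)" for x using pos that by (meson in_set_dropD)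
    fix k l assume e: "snd G l = Some k"
    hence "1 \<le> k" "k \<le> fst G" "1 \<le> l" "l \<le> fst G" using G unfolding parents_in_range_def by auto
    moreover have "w ! (k + fst F - 1) < w ! (l + fst F - 1)"
      using edge[OF forest_prod_parent_right[OF G e]] .
    ultimately show "drop (fst F) w ! (k - 1) < drop (fst F) w ! (l - 1)" using len
      by (simp add: add.commute)
  qed
  ultimately show ?thesis using len by simp
qed

lemma increasing_word_forest_prodI:
  assumes F: "parents_in_range F" and G: "parents_in_range G"
    and len: "length w = fst F + fst G"
    and incF: "increasing_word F (take (fst F) w)" and incG: "increasing_word G (drop (fst F) w)"
  shows "increasing_word (forest_prod F G) w"
  unfolding increasing_word_def
proof (intro conjI allI impI ballI)
  show "length w = fst (forest_prod F G)" using len by (simp add: forest_prod_def)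
next
  fix x assume "x \<in> set w"
  hence "x \<in> set (take (fst F) w) \<or> x \<in> set (drop (fst F) w)"
    by (metis Un_iff append_take_drop_id set_append)
  thus "1 \<le> x" using incF incG by (auto simp: increasing_word_def)
next
  fix k l assume e: "snd (forest_prod F G) l = Some k"
  from forest_prod_parent_cases[OF e] show "w ! (k - 1) < w ! (l - 1)"
  proof
    assume h: "1 \<le> l \<and> l \<le> fst F \<and> snd F l = Some k"
    hence "k - 1 < fst F" "l - 1 < fst F" using F unfolding parents_in_range_def by fastforce+
    moreover have "take (fst F) w ! (k - 1) < take (fst F) w ! (l - 1)"
      using incF h by (simp add: increasing_word_def)
    ultimately show ?thesis by simp
  next
    assume "fst F < l \<and> l \<le> fst F + fst G \<and> (\<exists>k'. snd G (l - fst F) = Some k' \<and> k = k' + fst F)"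
    then obtain k' where h: "fst F < l" "snd G (l - fst F) = Some k'" "k = k' + fst F" by blast
    have "1 \<le> k'" using G h(2) unfolding parents_in_range_def by auto
    have "drop (fst F) w ! (k' - 1) < drop (fst F) w ! (l - fst F - 1)"
      using incG h(2) unfolding increasing_word_def by blast
    moreover have "k - 1 = fst F + (k' - 1)" "l - 1 = fst F + (l - fst F - 1)"
      using h \<open>1 \<le> k'\<close> by arith+
    ultimately show ?thesis using len by simp
  qed
qed

lemma increasing_word_forest_prod:
  assumes F: "parents_in_range F" and G: "parents_in_range G"
  shows "increasing_word (forest_prod F G) w \<longleftrightarrow>
         length w = fst F + fst G \<and> increasing_word F (take (fst F) w)
         \<and> increasing_word G (drop (fst F) w)"
  using increasing_word_forest_prodD[OF F G] increasing_word_forest_prodI[OF F G] by blast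

text \<open>pi is multiplicative: in the Cauchy product only the cut at position fst F survives.\<close>
theorem piH_forest_prod:
  assumes "is_oforest F" "is_oforest G"
  shows "(piH (forest_prod F G) :: nat list \<Rightarrow> 'k::field) = ser_mult (piH F) (piH G)"
proof
  fix w :: "nat list"
  have F: "parents_in_range F" and G: "parents_in_range G"
    using assms by (auto intro: oforest_parents_in_range)
  note ind = piH_indicator[where 'k='k]
  let ?t = "(if increasing_word F (take (fst F) w) then 1 else 0)
            * (if increasing_word G (drop (fst F) w) then 1 else (0::'k))"
  have "ser_mult (piH F) (piH G) w = (\<Sum>i\<le>length w. (piH F (take i w) :: 'k) * piH G (drop i w))"
    by (simp add: ser_mult_def)
  also have "\<dots> = (\<Sum>i\<le>length w. if i = fst F then ?t else 0)"
  proof (rule sum.cong)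
    fix i assume i: "i \<in> {..length w}"
    show "(piH F (take i w) :: 'k) * piH G (drop i w) = (if i = fst F then ?t else 0)"
    proof (cases "i = fst F")
      case False
      hence "\<not> increasing_word F (take i w)" using i by (auto simp: increasing_word_def)
      thus ?thesis using False ind[OF F, of "take i w"] by simp
    qed (simp add: ind[OF F] ind[OF G])
  qed simp
  also have "\<dots> = (if fst F \<le> length w then ?t else 0)" by (simp add: sum.delta)
  also have "\<dots> = (if increasing_word (forest_prod F G) w then 1 else 0)"
    using increasing_word_forest_prod[OF F G, of w] by (auto simp: increasing_word_def)
  also have "\<dots> = piH (forest_prod F G) w"
    using ind[OF parents_in_range_forest_prod[OF F G], of w] by simp
  finally show "(piH (forest_prod F G) w :: 'k) = ser_mult (piH F) (piH G) w" by simp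
qed

section \<open>The image of pi spans WQSym\<close>

text \<open>It is built so that u is its smallest increasing packed word.\<close>
definition canonical_parent :: "nat list \<Rightarrow> nat \<Rightarrow> nat option" where
  "canonical_parent u l = (if 1 \<le> l \<and> l \<le> length u \<and> 2 \<le> u!(l-1)
      then Some (Suc (LEAST j. j < length u \<and> u!j = u!(l-1) - 1)) else None)"

definition canonical_forest :: "nat list \<Rightarrow> forest" where
  "canonical_forest u = (length u, canonical_parent u)"

lemma canonical_parent_Some:
  assumes p: "packed u" and e: "canonical_parent u l = Some k"
  shows "1 \<le> l \<and> l \<le> length u \<and> 2 \<le> u!(l-1) \<and> 1 \<le> k \<and> k \<le> length u \<and> u!(k-1) = u!(l-1) - 1"
proof -
  let ?P = "\<lambda>j. j < length u \<and> u!j = u!(l-1) - 1"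
  have l: "1 \<le> l" "l \<le> length u" "2 \<le> u!(l-1)" and k: "k = Suc (LEAST j. ?P j)"
    using e by (auto simp: canonical_parent_def split: if_splits)
  obtain c where c: "set u = {1..c}" using p by (rule packedE)
  have "u!(l-1) \<in> set u" using l by auto
  hence "u!(l-1) - 1 \<in> set u" using l(3) unfolding c by auto
  then obtain j where "?P j" by (auto simp: in_set_conv_nth)
  hence "?P (LEAST j. ?P j)" by (rule LeastI)
  thus ?thesis using l k by auto
qed

text \<open>Letters strictly increase along its edges, so the canonical forest is acyclic.\<close>
lemma canonical_forest_oforest:
  assumes p: "packed u"
  shows "is_oforest (canonical_forest u)"
proof -
  have "edges (canonical_parent u) \<subseteq> inv_image less_than (\<lambda>p. u!(p-1))"
  proof
    fix x assume "x \<in> edges (canonical_parent u)"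
    then obtain a b where x: "x = (a, b)" "canonical_parent u b = Some a" by (auto simp: edges_def)
    from canonical_parent_Some[OF p x(2)] show "x \<in> inv_image less_than (\<lambda>p. u!(p-1))"
      using x(1) by auto
  qed
  hence "acyclic (edges (canonical_parent u))"
    by (rule acyclic_subset[OF wf_acyclic[OF wf_inv_image[OF wf_less_than]]])
  moreover have "canonical_parent u k = None" if "k \<notin> {1..length u}" for k
    using that by (auto simp: canonical_parent_def)
  moreover have "p \<in> {1..length u}" if "canonical_parent u k = Some p" for k p
    using canonical_parent_Some[OF assms that] by auto
  ultimately show ?thesis unfolding is_oforest_def canonical_forest_def Let_def by auto
qed

lemma in_forest_words_canonical: "packed u \<Longrightarrow> u \<in> forest_words (canonical_forest u)"
  unfolding forest_words_def canonical_forest_def using canonical_parent_Some by fastforce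

text \<open>u is the componentwise minimum of forest_words (canonical_forest u): following the
  parent chain, position i has at least u_i - 1 strict ancestors.\<close>
lemma canonical_forest_minimal:
  assumes p: "packed u" and v: "v \<in> forest_words (canonical_forest u)" and i: "i < length u"
  shows "u!i \<le> v!i"
proof -
  have vp: "packed v" and vl: "length v = length u"
    and ve: "\<And>k l. canonical_parent u l = Some k \<Longrightarrow> v!(k-1) < v!(l-1)"
    using v by (auto simp: forest_words_def canonical_forest_def)
  have "\<forall>i<length u. u!i = t \<longrightarrow> t \<le> v!i" for t
  proof (induction t rule: less_induct)
    case (less t)
    show ?case
    proof (intro allI impI)
      fix i assume i: "i < length u" "u!i = t"
      show "t \<le> v!i"
      proof (cases "t \<le> 1")
        case True
        have "v!i \<in> set v" using i vl by auto
        thus ?thesis using packed_pos[OF vp] True by force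
      next
        case False
        then obtain k where e: "canonical_parent u (Suc i) = Some k"
          using i by (auto simp: canonical_parent_def)
        from canonical_parent_Some[OF p e] have k: "1 \<le> k" "k \<le> length u" "u!(k-1) = t - 1"
          using i by auto
        have "t - 1 \<le> v!(k-1)" using less.IH[of "t-1"] False k by auto
        moreover have "v!(k-1) < v!i" using ve[OF e] by simp
        ultimately show ?thesis by arith
      qed
    qed
  qed
  thus ?thesis using i by blast
qed

lemma sum_list_packed_bound:
  assumes "packed v"
  shows "sum_list v \<le> length v * length v"
proof -
  obtain c where c: "set v = {1..c}" "card (set v) = c" using assms by (rule packedE)
  have "c \<le> length v" using card_length[of v] c by simp
  hence "x \<le> length v" if "x \<in> set v" for x using that c by auto
  hence "sum_list v \<le> sum_list (map (\<lambda>_. length v) v)"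
    using sum_list_mono[of v "\<lambda>x. x" "\<lambda>_. length v"] by simp
  thus ?thesis by (simp add: sum_list_triv)
qed

lemma canonical_forest_sum_less:
  assumes p: "packed u" and v: "v \<in> forest_words (canonical_forest u)" and ne: "v \<noteq> u"
  shows "sum_list u < sum_list v"
proof -
  have vl: "length v = length u" using v by (auto simp: forest_words_def canonical_forest_def)
  have ge: "\<forall>i\<in>{..<length u}. u!i \<le> v!i" using canonical_forest_minimal[OF p v] by auto
  obtain i where "i < length u" "u!i \<noteq> v!i" using ne vl nth_equalityI by metis
  hence "\<exists>i\<in>{..<length u}. u!i < v!i" using ge by force
  hence "(\<Sum>i<length u. u!i) < (\<Sum>i<length u. v!i)"
    using ge by (intro sum_strict_mono_ex1) auto
  thus ?thesis by (simp add: sum_list_sum_nth vl atLeast0LessThan)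
qed

context
  fixes P :: "(nat list \<Rightarrow> 'k::field) set"
  defines "P \<equiv> {piH F | F. is_oforest F}"
begin

interpretation ser: module "ser_scale :: 'k \<Rightarrow> (nat list \<Rightarrow> 'k) \<Rightarrow> _"
  by (rule module_ser_scale)

text \<open>M_u = pi(S'^{canonical forest of u}) - (M_v for the other words v of that forest),
  and the v have larger letter sum; induction on the deficit n^2 - (sum of u).\<close>
lemma M_in_span_piH:
  assumes "packed u"
  shows "M u \<in> ser.span P"
  using assms
proof (induction "length u * length u - sum_list u" arbitrary: u rule: less_induct)
  case less
  let ?W = "forest_words (canonical_forest u)"
  have u_in: "u \<in> ?W" using less.prems by (rule in_forest_words_canonical)
  have "(piH (canonical_forest u) :: nat list \<Rightarrow> 'k) = (\<Sum>v\<in>?W. M v)"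
    by (rule piH_sum_M[OF canonical_forest_oforest[OF less.prems]])
  also have "\<dots> = M u + (\<Sum>v\<in>?W - {u}. M v)"
    by (rule sum.remove[OF finite_forest_words u_in])
  finally have M_u: "M u = piH (canonical_forest u) - (\<Sum>v\<in>?W - {u}. M v :: nat list \<Rightarrow> 'k)"
    by (simp add: algebra_simps)
  have "piH (canonical_forest u) \<in> ser.span P"
    unfolding P_def using canonical_forest_oforest[OF less.prems] by (intro ser.span_base) blast
  moreover have "(\<Sum>v\<in>?W - {u}. M v :: nat list \<Rightarrow> 'k) \<in> ser.span P"
  proof (intro ser.span_sum)
    fix v assume v: "v \<in> ?W - {u}"
    have vp: "packed v" "length v = length u"
      using v by (auto simp: forest_words_def canonical_forest_def)
    have "sum_list u < sum_list v" using canonical_forest_sum_less[OF less.prems] v by blast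
    moreover have "sum_list v \<le> length u * length u" using sum_list_packed_bound[OF vp(1)] vp by simp
    ultimately show "M v \<in> ser.span P" using less.hyps[OF _ vp(1)] vp by simp
  qed
  ultimately show "M u \<in> ser.span P" unfolding M_u by (rule ser.span_diff)
qed

theorem span_piH_eq_WQSym: "ser.span P = WQSym"
proof -
  let ?Q = "{M u :: nat list \<Rightarrow> 'k | u. packed u}"
  have "P \<subseteq> ser.span ?Q"
  proof
    fix f assume "f \<in> P"
    then obtain F where F: "is_oforest F" "f = piH F" unfolding P_def by blast
    have "(\<Sum>u\<in>forest_words F. M u :: nat list \<Rightarrow> 'k) \<in> ser.span ?Q"
      by (intro ser.span_sum ser.span_base) (auto simp: forest_words_def)
    thus "f \<in> ser.span ?Q" using piH_sum_M[OF F(1), where 'k='k] F(2) by simp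
  qed
  moreover have "?Q \<subseteq> ser.span P" using M_in_span_piH by blast
  ultimately show ?thesis unfolding WQSym_def ser.span_eq by blast
qed

end

section \<open>Standardised subforests\<close>

lemma rank_sorted_list_nth:
  assumes T: "finite (T::nat set)" and j: "j < card T"
  shows "rank T (sorted_list_of_set T ! j) = Suc j"
proof -
  let ?L = "sorted_list_of_set T"
  have len: "length ?L = card T" using T by simp
  have st: "sorted_wrt (<) ?L" by (rule strict_sorted_list_of_set)
  have "{x\<in>T. x \<le> ?L!j} = (!) ?L ` {..j}"
  proof
    show "{x\<in>T. x \<le> ?L!j} \<subseteq> (!) ?L ` {..j}"
    proof
      fix x assume x: "x \<in> {x\<in>T. x \<le> ?L!j}"
      hence "x \<in> set ?L" using T by simp
      then obtain i where i: "i < length ?L" "x = ?L!i" by (auto simp: in_set_conv_nth)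
      have "i \<le> j"
      proof (rule ccontr)
        assume "\<not> i \<le> j"
        hence "?L!j < ?L!i" using sorted_wrt_nth_less[OF st, of j i] i by simp
        thus False using x i by simp
      qed
      thus "x \<in> (!) ?L ` {..j}" using i by auto
    qed
  next
    show "(!) ?L ` {..j} \<subseteq> {x\<in>T. x \<le> ?L!j}"
    proof
      fix x assume "x \<in> (!) ?L ` {..j}"
      then obtain i where i: "i \<le> j" "x = ?L!i" by auto
      have "i < length ?L" using i j len by simp
      hence "x \<in> T" using i T by (metis nth_mem set_sorted_list_of_set)
      moreover have "x \<le> ?L!j"
      proof (cases "i = j")
        case False thus ?thesis using sorted_wrt_nth_less[OF st, of i j] i j len by simp
      qed (use i in simp)
      ultimately show "x \<in> {x\<in>T. x \<le> ?L!j}" by simp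
    qed
  qed
  moreover have "inj_on ((!) ?L) {..j}" using j len by (intro inj_on_nth) auto
  ultimately show ?thesis unfolding rank_def by (simp add: card_image)
qed

lemma sorted_list_nth_rank:
  assumes T: "finite (T::nat set)" and p: "p \<in> T"
  shows "sorted_list_of_set T ! (rank T p - 1) = p \<and> 1 \<le> rank T p \<and> rank T p \<le> card T"
proof -
  have "p \<in> set (sorted_list_of_set T)" using T p by simp
  then obtain i where i: "i < length (sorted_list_of_set T)" "p = sorted_list_of_set T ! i"
    by (auto simp: in_set_conv_nth)
  have "i < card T" using i T by simp
  hence "rank T p = Suc i" using rank_sorted_list_nth[OF T] i by simp
  thus ?thesis using i \<open>i < card T\<close> by simp
qed

lemma map_sorted_list_rank:
  assumes T: "finite (T::nat set)" and v: "length v = card T"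
  shows "map (\<lambda>p. v ! (rank T p - 1)) (sorted_list_of_set T) = v"
proof (rule nth_equalityI)
  show "length (map (\<lambda>p. v ! (rank T p - 1)) (sorted_list_of_set T)) = length v" using T v by simp
  fix i assume "i < length (map (\<lambda>p. v ! (rank T p - 1)) (sorted_list_of_set T))"
  hence i: "i < card T" using T by simp
  show "map (\<lambda>p. v ! (rank T p - 1)) (sorted_list_of_set T) ! i = v ! i"
    using i T rank_sorted_list_nth[OF T i] by simp
qed

lemma fst_induced_std [simp]: "fst (induced_std F T) = card T"
  by (simp add: induced_std_def)

lemma induced_std_parent:
  assumes T: "finite (T::nat set)"
  shows "snd (induced_std F T) j = Some q \<longleftrightarrow>
    (\<exists>c p. c \<in> T \<and> p \<in> T \<and> snd F c = Some p \<and> j = rank T c \<and> q = rank T p)"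
proof
  assume e: "snd (induced_std F T) j = Some q"
  hence j: "1 \<le> j" "j \<le> card T" by (auto simp: induced_std_def split: if_splits)
  let ?c = "sorted_list_of_set T ! (j - 1)"
  have "j - 1 < length (sorted_list_of_set T)" using j T by simp
  hence c: "?c \<in> T" using T by (metis nth_mem set_sorted_list_of_set)
  have rc: "rank T ?c = j" using rank_sorted_list_nth[OF T, of "j-1"] j by simp
  from e j obtain p where p: "snd F ?c = Some p" "p \<in> T" "q = rank T p"
    by (auto simp: induced_std_def Let_def split: option.splits if_splits)
  show "\<exists>c p. c \<in> T \<and> p \<in> T \<and> snd F c = Some p \<and> j = rank T c \<and> q = rank T p"
    using c rc p by metis
next
  assume "\<exists>c p. c \<in> T \<and> p \<in> T \<and> snd F c = Some p \<and> j = rank T c \<and> q = rank T p"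
  then obtain c p where h: "c \<in> T" "p \<in> T" "snd F c = Some p" "j = rank T c" "q = rank T p" by blast
  have "sorted_list_of_set T ! (j - 1) = c" "1 \<le> j" "j \<le> card T"
    using sorted_list_nth_rank[OF T h(1)] h(4) by auto
  thus "snd (induced_std F T) j = Some q" using h by (simp add: induced_std_def Let_def)
qed

lemma parents_in_range_induced_std:
  assumes T: "finite (T::nat set)"
  shows "parents_in_range (induced_std F T)"
  unfolding parents_in_range_def
proof (intro allI impI)
  fix k l assume "snd (induced_std F T) l = Some k"
  then obtain c p where h: "c \<in> T" "p \<in> T" "snd F c = Some p" "l = rank T c" "k = rank T p"
    using induced_std_parent[OF T] by blast
  show "k \<in> {1..fst (induced_std F T)} \<and> l \<in> {1..fst (induced_std F T)}"
    using sorted_list_nth_rank[OF T h(1)] sorted_list_nth_rank[OF T h(2)] h by simp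
qed

lemma increasing_word_induced_std:
  assumes T: "finite (T::nat set)"
  shows "increasing_word (induced_std F T) w \<longleftrightarrow> length w = card T \<and> (\<forall>x\<in>set w. 1 \<le> x) \<and>
     (\<forall>c p. c \<in> T \<longrightarrow> p \<in> T \<longrightarrow> snd F c = Some p \<longrightarrow> w!(rank T p - 1) < w!(rank T c - 1))"
  unfolding increasing_word_def fst_induced_std induced_std_parent[OF T] by blast

lemma filter_as_positions:
  "filter P u = map (\<lambda>p. u!(p-1)) (sorted_list_of_set {p\<in>{1..length u}. P (u!(p-1))})"
proof -
  let ?T = "{p\<in>{1..length u}. P (u!(p-1))}"
  have u: "u = map (\<lambda>p. u!(p-1)) [1..<Suc (length u)]"
    by (rule nth_equalityI) (simp_all del: upt_Suc)
  have "filter P u = map (\<lambda>p. u!(p-1)) (filter (\<lambda>p. P (u!(p-1))) [1..<Suc (length u)])"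
    by (subst u) (simp add: filter_map comp_def)
  moreover have "filter (\<lambda>p. P (u!(p-1))) [1..<Suc (length u)] = sorted_list_of_set ?T"
  proof (rule strict_sorted_equal)
    show "sorted_wrt (<) (filter (\<lambda>p. P (u!(p-1))) [1..<Suc (length u)])"
      by (rule sorted_wrt_filter) (simp del: upt_Suc)
    show "sorted_wrt (<) (sorted_list_of_set ?T)" by (rule strict_sorted_list_of_set)
    show "set (filter (\<lambda>p. P (u!(p-1))) [1..<Suc (length u)]) = set (sorted_list_of_set ?T)"
      by (auto simp del: upt_Suc)
  qed
  ultimately show ?thesis by simp
qed

lemma filter_nth_rank:
  assumes T: "T = {p\<in>{1..length u}. P (u!(p-1))}"
  shows "length (filter P u) = card T"
    and "p \<in> T \<Longrightarrow> filter P u ! (rank T p - 1) = u!(p-1)"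
proof -
  have fin: "finite T" using T by simp
  have fs: "filter P u = map (\<lambda>p. u!(p-1)) (sorted_list_of_set T)"
    unfolding T by (rule filter_as_positions)
  show "length (filter P u) = card T" using fs fin by simp
  assume p: "p \<in> T"
  from sorted_list_nth_rank[OF fin p] have "rank T p - 1 < length (sorted_list_of_set T)"
    "sorted_list_of_set T ! (rank T p - 1) = p" using fin by auto
  thus "filter P u ! (rank T p - 1) = u!(p-1)" using fs by simp
qed

section \<open>Admissible cuts and descendant-closed sets\<close>

text \<open>Sets of vertices closed under taking children.  The map V \<mapsto> V + descendants is
  a bijection from admissible cuts onto these sets, with inverse S \<mapsto> minimal elements.\<close>
definition desc_closed :: "forest \<Rightarrow> nat set set" where
  "desc_closed F = {S. S \<subseteq> {1..fst F} \<and> (\<forall>p c. snd F c = Some p \<longrightarrow> p \<in> S \<longrightarrow> c \<in> S)}"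

definition minimal_elems :: "forest \<Rightarrow> nat set \<Rightarrow> nat set" where
  "minimal_elems F S = {x\<in>S. \<forall>y\<in>S. (y, x) \<notin> (edges (snd F))\<^sup>+}"

lemma finite_desc_closed: "finite (desc_closed F)"
proof -
  have "desc_closed F \<subseteq> Pow {1..fst F}" by (auto simp: desc_closed_def)
  thus ?thesis by (rule finite_subset) simp
qed

context
  fixes F :: forest
  assumes F: "is_oforest F"
begin

lemma edges_in_range: "(a, b) \<in> edges (snd F) \<Longrightarrow> a \<in> {1..fst F} \<and> b \<in> {1..fst F}"
  using oforest_parents_in_range[OF F] unfolding parents_in_range_def edges_def by auto

lemma acyclic_edges: "acyclic (edges (snd F))"
  using F unfolding is_oforest_def Let_def by blast

text \<open>A finite acyclic relation is well-founded, so every nonempty vertex set has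
  minimal elements for the ancestor relation.\<close>
lemma wf_edges: "wf (edges (snd F))"
proof (rule finite_acyclic_wf)
  have "edges (snd F) \<subseteq> {1..fst F} \<times> {1..fst F}" using edges_in_range by auto
  thus "finite (edges (snd F))" by (rule finite_subset) simp
qed (rule acyclic_edges)

lemma desc_closed_descendant:
  assumes S: "S \<in> desc_closed F" and xy: "(x, y) \<in> (edges (snd F))\<^sup>*" and x: "x \<in> S"
  shows "y \<in> S"
  using xy
proof (induction rule: rtrancl_induct)
  case base thus ?case using x .
next
  case (step y z)
  thus ?case using S unfolding desc_closed_def edges_def by auto
qed

lemma desc_closure_subset: "V \<subseteq> {1..fst F} \<Longrightarrow> desc_closure F V \<subseteq> {1..fst F}"
proof
  fix l assume V: "V \<subseteq> {1..fst F}" and "l \<in> desc_closure F V"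
  then obtain v where v: "v \<in> V" "(v, l) \<in> (edges (snd F))\<^sup>*" by (auto simp: desc_closure_def)
  from v(2) show "l \<in> {1..fst F}"
  proof (cases rule: rtranclE)
    case base thus ?thesis using v V by auto
  next
    case (step y) thus ?thesis using edges_in_range by blast
  qed
qed

lemma desc_closure_desc_closed: "admissible_cut F V \<Longrightarrow> desc_closure F V \<in> desc_closed F"
  unfolding desc_closed_def
proof (intro CollectI conjI allI impI)
  assume "admissible_cut F V"
  thus "desc_closure F V \<subseteq> {1..fst F}" using desc_closure_subset by (simp add: admissible_cut_def)
  fix p c assume e: "snd F c = Some p" and p: "p \<in> desc_closure F V"
  then obtain v where v: "v \<in> V" "(v, p) \<in> (edges (snd F))\<^sup>*" by (auto simp: desc_closure_def)
  have "(p, c) \<in> edges (snd F)" using e by (simp add: edges_def)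
  hence "(v, c) \<in> (edges (snd F))\<^sup>*" by (rule rtrancl_into_rtrancl[OF v(2)])
  thus "c \<in> desc_closure F V" using v(1) unfolding desc_closure_def by blast
qed

lemma minimal_elems_desc_closure:
  assumes V: "admissible_cut F V"
  shows "minimal_elems F (desc_closure F V) = V"
proof
  show "minimal_elems F (desc_closure F V) \<subseteq> V"
  proof
    fix x assume "x \<in> minimal_elems F (desc_closure F V)"
    hence x: "x \<in> desc_closure F V" "\<forall>y\<in>desc_closure F V. (y, x) \<notin> (edges (snd F))\<^sup>+"
      by (auto simp: minimal_elems_def)
    then obtain v where v: "v \<in> V" "(v, x) \<in> (edges (snd F))\<^sup>*" by (auto simp: desc_closure_def)
    have "v \<in> desc_closure F V" using v(1) by (auto simp: desc_closure_def)
    hence "v = x" using rtranclD[OF v(2)] x(2) by blast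
    thus "x \<in> V" using v by simp
  qed
next
  show "V \<subseteq> minimal_elems F (desc_closure F V)"
  proof
    fix x assume x: "x \<in> V"
    have "(y, x) \<notin> (edges (snd F))\<^sup>+" if y: "y \<in> desc_closure F V" for y
    proof
      assume yx: "(y, x) \<in> (edges (snd F))\<^sup>+"
      obtain v where v: "v \<in> V" "(v, y) \<in> (edges (snd F))\<^sup>*" using y by (auto simp: desc_closure_def)
      have vx: "(v, x) \<in> (edges (snd F))\<^sup>+" using v(2) yx by (rule rtrancl_trancl_trancl)
      show False
      proof (cases "v = x")
        case True thus False using vx acyclic_edges by (simp add: acyclic_def)
      next
        case False thus False using V v(1) x vx by (auto simp: admissible_cut_def)
      qed
    qed
    moreover have "x \<in> desc_closure F V" using x by (auto simp: desc_closure_def)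
    ultimately show "x \<in> minimal_elems F (desc_closure F V)" by (simp add: minimal_elems_def)
  qed
qed

lemma minimal_elems_admissible: "S \<in> desc_closed F \<Longrightarrow> admissible_cut F (minimal_elems F S)"
  unfolding admissible_cut_def minimal_elems_def desc_closed_def by auto

lemma desc_closure_minimal_elems:
  assumes S: "S \<in> desc_closed F"
  shows "desc_closure F (minimal_elems F S) = S"
proof
  show "desc_closure F (minimal_elems F S) \<subseteq> S"
  proof
    fix l assume "l \<in> desc_closure F (minimal_elems F S)"
    then obtain v where "v \<in> minimal_elems F S" "(v, l) \<in> (edges (snd F))\<^sup>*"
      by (auto simp: desc_closure_def)
    thus "l \<in> S" using desc_closed_descendant[OF S] by (auto simp: minimal_elems_def)
  qed
next
  show "S \<subseteq> desc_closure F (minimal_elems F S)"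
  proof
    fix x assume x: "x \<in> S"
    let ?Q = "{y\<in>S. (y, x) \<in> (edges (snd F))\<^sup>*}"
    have "x \<in> ?Q" using x by simp
    hence "\<exists>z\<in>?Q. \<forall>y. (y, z) \<in> (edges (snd F))\<^sup>+ \<longrightarrow> y \<notin> ?Q"
      by (rule wf_eq_minimal[THEN iffD1, OF wf_trancl[OF wf_edges], rule_format])
    then obtain z where z: "z \<in> ?Q" "\<And>y. (y, z) \<in> (edges (snd F))\<^sup>+ \<Longrightarrow> y \<notin> ?Q"
      by blast
    have "(y, z) \<notin> (edges (snd F))\<^sup>+" if "y \<in> S" for y
    proof
      assume yz: "(y, z) \<in> (edges (snd F))\<^sup>+"
      have "(y, x) \<in> (edges (snd F))\<^sup>*"
        using z(1) trancl_into_rtrancl[OF yz] by (auto intro: rtrancl_trans)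
      thus False using z(2)[OF yz] that by simp
    qed
    hence "z \<in> minimal_elems F S" using z(1) by (simp add: minimal_elems_def)
    moreover have "(z, x) \<in> (edges (snd F))\<^sup>*" using z(1) by simp
    ultimately show "x \<in> desc_closure F (minimal_elems F S)" unfolding desc_closure_def by blast
  qed
qed

lemma bij_admissible_desc_closed:
  "bij_betw (desc_closure F) {V. admissible_cut F V} (desc_closed F)"
proof (rule bij_betw_byWitness[where f' = "minimal_elems F"])
  show "\<forall>V\<in>{V. admissible_cut F V}. minimal_elems F (desc_closure F V) = V"
    using minimal_elems_desc_closure by blast
  show "\<forall>S\<in>desc_closed F. desc_closure F (minimal_elems F S) = S"
    using desc_closure_minimal_elems by blast
  show "desc_closure F ` {V. admissible_cut F V} \<subseteq> desc_closed F"
    using desc_closure_desc_closed by blast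
  show "minimal_elems F ` desc_closed F \<subseteq> {V. admissible_cut F V}"
    using minimal_elems_admissible by blast
qed

lemma piH_coprod_desc_closed:
  "(piH_coprod F w1 w2 :: 'k::field) =
   (\<Sum>S\<in>desc_closed F. piH (induced_std F ({1..fst F} - S)) w1 * piH (induced_std F S) w2)"
  unfolding piH_coprod_def Roo_def Lea_def
  by (rule sum.reindex_bij_betw[OF bij_admissible_desc_closed])

end

section \<open>The coproduct of M_u\<close>

definition in_coprod_support :: "nat list \<Rightarrow> nat list \<Rightarrow> nat list \<Rightarrow> bool" where
  "in_coprod_support u w1 w2 \<longleftrightarrow> (\<forall>x\<in>set w1. 1 \<le> x) \<and> (\<forall>x\<in>set w2. 1 \<le> x)
     \<and> card (set w1) \<le> card (set u) \<and> pack w1 = restr u {1..card (set w1)}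
     \<and> pack w2 = pack (restr u {card (set w1) + 1..card (set u)})"

lemma Max_packed: "packed u \<Longrightarrow> Max (insert 0 (set u)) = card (set u)"
proof -
  assume "packed u"
  then obtain c where c: "set u = {1..c}" "card (set u) = c" by (rule packedE)
  show ?thesis
  proof (cases "c = 0")
    case False thus ?thesis using c by (intro Max_eqI) auto
  qed (use c in simp)
qed

lemma set_restr_lower: "packed u \<Longrightarrow> k \<le> card (set u) \<Longrightarrow> set (restr u {1..k}) = {1..k}"
  by (erule packedE) (auto simp: restr_def)

lemma restr_upper_filter:
  "\<forall>x\<in>set u. 1 \<le> x \<and> x \<le> c \<Longrightarrow> restr u {a+1..c} = filter (\<lambda>x. a < x) u"
  unfolding restr_def by (rule filter_cong) auto

lemma restr_lower_filter: "\<forall>x\<in>set u. 1 \<le> x \<Longrightarrow> restr u {1..a} = filter (\<lambda>x. x \<le> a) u"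
  unfolding restr_def by (rule filter_cong) auto

text \<open>Only the term k = card (set w1) of the sum defining Delta M_u can be nonzero at
  (w1, w2), because the left factor forces pack w1 to have exactly k distinct letters.\<close>
lemma coprod_M_indicator:
  assumes u: "packed u"
  shows "(coprod_M u w1 w2 :: 'k::field) = (if in_coprod_support u w1 w2 then 1 else 0)"
proof -
  let ?c = "card (set u)" and ?k0 = "card (set w1)"
  let ?t = "\<lambda>k. (M (restr u {1..k}) w1 :: 'k) * M (pack (restr u {k+1..?c})) w2"
  have "coprod_M u w1 w2 = (\<Sum>k\<le>?c. ?t k)"
    unfolding coprod_M_def Max_packed[OF u] ..
  also have "\<dots> = (\<Sum>k\<le>?c. if k = ?k0 then ?t ?k0 else 0)"
  proof (rule sum.cong)
    fix k assume k: "k \<in> {..?c}"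
    show "?t k = (if k = ?k0 then ?t ?k0 else 0)"
    proof (cases "k = ?k0")
      case False
      have "pack w1 \<noteq> restr u {1..k}"
      proof
        assume "pack w1 = restr u {1..k}"
        hence "{1..?k0} = {1..k}" using set_pack[of w1] set_restr_lower[OF u, of k] k by simp
        thus False using False by (metis card_atLeastAtMost diff_Suc_1)
      qed
      thus ?thesis using False by (simp add: M_def)
    qed simp
  qed simp
  also have "\<dots> = (if ?k0 \<le> ?c then ?t ?k0 else 0)" by (simp add: sum.delta)
  also have "\<dots> = (if in_coprod_support u w1 w2 then 1 else 0)"
    unfolding in_coprod_support_def M_def by auto
  finally show ?thesis .
qed

section \<open>Words of F contributing to (w1, w2) versus cuts of F\<close>

text \<open>Left side of the coproduct identity at (w1, w2): words of forest_words F whose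
  coproduct contains M_{pack w1} (x) M_{pack w2}.  Right side: descendant-closed sets S
  such that w1 is increasing on the root part and w2 on the leaf part.\<close>
definition split_words :: "forest \<Rightarrow> nat list \<Rightarrow> nat list \<Rightarrow> nat list set" where
  "split_words F w1 w2 = {u \<in> forest_words F. in_coprod_support u w1 w2}"

definition split_cuts :: "forest \<Rightarrow> nat list \<Rightarrow> nat list \<Rightarrow> nat set set" where
  "split_cuts F w1 w2 = {S \<in> desc_closed F. increasing_word (induced_std F ({1..fst F} - S)) w1
                                          \<and> increasing_word (induced_std F S) w2}"

definition upper_positions :: "forest \<Rightarrow> nat list \<Rightarrow> nat list \<Rightarrow> nat set" where
  "upper_positions F w1 u = {p\<in>{1..fst F}. card (set w1) < u!(p-1)}"

definition glue_letter :: "forest \<Rightarrow> nat list \<Rightarrow> nat list \<Rightarrow> nat set \<Rightarrow> nat \<Rightarrow> nat" where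
  "glue_letter F w1 w2 S p = (if p \<in> S then card (set w1) + pack w2 ! (rank S p - 1)
                              else pack w1 ! (rank ({1..fst F} - S) p - 1))"

definition glue_word :: "forest \<Rightarrow> nat list \<Rightarrow> nat list \<Rightarrow> nat set \<Rightarrow> nat list" where
  "glue_word F w1 w2 S = map (glue_letter F w1 w2 S) [1..<Suc (fst F)]"

lemma glue_word_nth: "p \<in> {1..fst F} \<Longrightarrow> glue_word F w1 w2 S ! (p - 1) = glue_letter F w1 w2 S p"
proof -
  assume p: "p \<in> {1..fst F}"
  hence "p - 1 < length [1..<Suc (fst F)]" "[1..<Suc (fst F)] ! (p - 1) = p"
    by (auto simp del: upt_Suc)
  thus ?thesis unfolding glue_word_def by simp
qed

lemma length_glue_word [simp]: "length (glue_word F w1 w2 S) = fst F"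
  unfolding glue_word_def by (simp del: upt_Suc)

lemma split_words_forest_word:
  "u \<in> split_words F w1 w2 \<Longrightarrow> packed u \<and> length u = fst F \<and> (\<forall>k l. snd F l = Some k \<longrightarrow> u!(k-1) < u!(l-1))"
  by (auto simp: split_words_def forest_words_def)

context
  fixes F :: forest and w1 w2 :: "nat list"
  assumes F: "is_oforest F"
begin

lemma split_word_reads:
  assumes u: "u \<in> split_words F w1 w2"
  defines "S \<equiv> upper_positions F w1 u"
  defines "T \<equiv> {1..fst F} - S"
  shows "length w1 = card T \<and> (\<forall>p\<in>T. pack w1 ! (rank T p - 1) = u!(p-1))"
    and "length w2 = card S \<and> (\<forall>p\<in>S. card (set w1) + pack w2 ! (rank S p - 1) = u!(p-1))"
proof -
  have u_facts: "packed u" "length u = fst F" and cm: "in_coprod_support u w1 w2"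
    using split_words_forest_word[OF u] u by (auto simp: split_words_def)
  obtain c where c: "set u = {1..c}" "card (set u) = c" using u_facts(1) by (rule packedE)
  let ?k0 = "card (set w1)"
  have range: "\<forall>x\<in>set u. 1 \<le> x \<and> x \<le> c" using c by auto
  have T_eq: "T = {p\<in>{1..length u}. u!(p-1) \<le> ?k0}"
    unfolding T_def S_def upper_positions_def using u_facts(2) by auto
  have S_eq: "S = {p\<in>{1..length u}. ?k0 < u!(p-1)}"
    unfolding S_def upper_positions_def using u_facts(2) by auto
  have "pack w1 = filter (\<lambda>x. x \<le> ?k0) u"
    using cm range restr_lower_filter[of u ?k0] by (simp add: in_coprod_support_def)
  thus "length w1 = card T \<and> (\<forall>p\<in>T. pack w1 ! (rank T p - 1) = u!(p-1))"
    using filter_nth_rank[OF T_eq] length_pack[of w1] by metis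
  let ?z = "filter (\<lambda>x. ?k0 < x) u"
  have "pack w2 = pack ?z"
    using cm c restr_upper_filter[OF range, of ?k0] by (simp add: in_coprod_support_def)
  moreover have "set ?z = {?k0 + 1..c}" using c by auto
  ultimately have z: "?z = map (\<lambda>x. x + ?k0) (pack w2)" by (metis interval_word_shift_pack)
  have lz: "length ?z = card S" and nz: "\<And>p. p \<in> S \<Longrightarrow> ?z ! (rank S p - 1) = u!(p-1)"
    using filter_nth_rank[OF S_eq] by auto
  have len2: "length w2 = card S" using lz z by (metis length_map length_pack)
  moreover have "?k0 + pack w2 ! (rank S p - 1) = u!(p-1)" if p: "p \<in> S" for p
  proof -
    have "finite S" unfolding S_def upper_positions_def by simp
    hence "rank S p - 1 < length (pack w2)" using sorted_list_nth_rank[OF _ p] len2 by auto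
    thus ?thesis using nz[OF p] z by (metis add.commute nth_map)
  qed
  ultimately show "length w2 = card S \<and> (\<forall>p\<in>S. ?k0 + pack w2 ! (rank S p - 1) = u!(p-1))"
    by blast
qed

lemma glue_upper_positions:
  assumes u: "u \<in> split_words F w1 w2"
  shows "glue_word F w1 w2 (upper_positions F w1 u) = u"
proof (rule nth_equalityI)
  show "length (glue_word F w1 w2 (upper_positions F w1 u)) = length u"
    using split_words_forest_word[OF u] by simp
  fix i assume "i < length (glue_word F w1 w2 (upper_positions F w1 u))"
  hence i: "Suc i \<in> {1..fst F}" by simp
  show "glue_word F w1 w2 (upper_positions F w1 u) ! i = u ! i"
    using glue_word_nth[OF i] split_word_reads[OF u] i
    by (cases "Suc i \<in> upper_positions F w1 u") (auto simp: glue_letter_def)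
qed

text \<open>Order comparisons inside T (resp. S) transfer from u to w1 (resp. w2), since
  packing preserves them; hence the upper positions of u form a right-hand cut.\<close>
lemma upper_positions_split_cut:
  assumes u: "u \<in> split_words F w1 w2"
  shows "upper_positions F w1 u \<in> split_cuts F w1 w2"
proof -
  have edge: "\<And>k l. snd F l = Some k \<Longrightarrow> u!(k-1) < u!(l-1)"
    and cm: "in_coprod_support u w1 w2"
    using split_words_forest_word[OF u] u by (auto simp: split_words_def)
  note reads = split_word_reads[OF u]
  let ?S = "upper_positions F w1 u" and ?T = "{1..fst F} - upper_positions F w1 u"
  have finS: "finite ?S" by (simp add: upper_positions_def)
  have finT: "finite ?T" by simp
  have pos1: "\<forall>x\<in>set w1. 1 \<le> x" and pos2: "\<forall>x\<in>set w2. 1 \<le> x"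
    using cm by (auto simp: in_coprod_support_def)
  have "?S \<in> desc_closed F"
    unfolding desc_closed_def
  proof (intro CollectI conjI allI impI)
    show "?S \<subseteq> {1..fst F}" by (auto simp: upper_positions_def)
    fix p c assume e: "snd F c = Some p" and p: "p \<in> ?S"
    have "c \<in> {1..fst F}" using oforest_parents_in_range[OF F] e unfolding parents_in_range_def by blast
    thus "c \<in> ?S" using p edge[OF e] by (auto simp: upper_positions_def)
  qed
  moreover have "increasing_word (induced_std F ?T) w1"
    unfolding increasing_word_induced_std[OF finT]
  proof (intro conjI allI impI pos1)
    show "length w1 = card ?T" using reads(1) by simp
    fix c p assume c: "c \<in> ?T" and p: "p \<in> ?T" and e: "snd F c = Some p"
    have "rank ?T c - 1 < length w1" "rank ?T p - 1 < length w1"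
      using sorted_list_nth_rank[OF finT c] sorted_list_nth_rank[OF finT p] reads(1) by auto
    moreover have "pack w1 ! (rank ?T p - 1) < pack w1 ! (rank ?T c - 1)"
      using reads(1) c p edge[OF e] by simp
    ultimately show "w1 ! (rank ?T p - 1) < w1 ! (rank ?T c - 1)" by (simp add: pack_less_iff)
  qed
  moreover have "increasing_word (induced_std F ?S) w2"
    unfolding increasing_word_induced_std[OF finS]
  proof (intro conjI allI impI pos2)
    show "length w2 = card ?S" using reads(2) by simp
    fix c p assume c: "c \<in> ?S" and p: "p \<in> ?S" and e: "snd F c = Some p"
    have "rank ?S c - 1 < length w2" "rank ?S p - 1 < length w2"
      using sorted_list_nth_rank[OF finS c] sorted_list_nth_rank[OF finS p] reads(2) by auto
    moreover have "pack w2 ! (rank ?S p - 1) < pack w2 ! (rank ?S c - 1)"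
      using reads(2) c p edge[OF e] by (metis add_less_cancel_left)
    ultimately show "w2 ! (rank ?S p - 1) < w2 ! (rank ?S c - 1)" by (simp add: pack_less_iff)
  qed
  ultimately show ?thesis by (simp add: split_cuts_def)
qed

end

context
  fixes F :: forest and w1 w2 :: "nat list" and S :: "nat set"
  assumes F: "is_oforest F" and S: "S \<in> split_cuts F w1 w2"
begin

lemma split_cut_facts:
  shows "S \<subseteq> {1..fst F}" "finite S"
    and "increasing_word (induced_std F ({1..fst F} - S)) w1" "increasing_word (induced_std F S) w2"
    and "length w1 = card ({1..fst F} - S)" "length w2 = card S"
proof -
  show sub: "S \<subseteq> {1..fst F}" using S by (simp add: split_cuts_def desc_closed_def)
  thus fin: "finite S" by (rule finite_subset) simp
  show inc1: "increasing_word (induced_std F ({1..fst F} - S)) w1"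
    and inc2: "increasing_word (induced_std F S) w2" using S by (auto simp: split_cuts_def)
  show "length w1 = card ({1..fst F} - S)" using inc1 by (simp add: increasing_word_def)
  show "length w2 = card S" using inc2 by (simp add: increasing_word_def)
qed

lemma glue_letter_lower:
  assumes p: "p \<in> {1..fst F} - S"
  shows "glue_letter F w1 w2 S p = pack w1 ! (rank ({1..fst F} - S) p - 1)"
    and "rank ({1..fst F} - S) p - 1 < length w1"
    and "glue_letter F w1 w2 S p \<in> {1..card (set w1)}"
proof -
  show "glue_letter F w1 w2 S p = pack w1 ! (rank ({1..fst F} - S) p - 1)"
    using p by (simp add: glue_letter_def)
  show idx: "rank ({1..fst F} - S) p - 1 < length w1"
    using sorted_list_nth_rank[OF _ p] split_cut_facts(5) by auto
  hence "pack w1 ! (rank ({1..fst F} - S) p - 1) \<in> set (pack w1)" by simp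
  thus "glue_letter F w1 w2 S p \<in> {1..card (set w1)}" using p by (simp add: glue_letter_def set_pack)
qed

lemma glue_letter_upper:
  assumes p: "p \<in> S"
  shows "glue_letter F w1 w2 S p = card (set w1) + pack w2 ! (rank S p - 1)"
    and "rank S p - 1 < length w2"
    and "pack w2 ! (rank S p - 1) \<in> {1..card (set w2)}"
proof -
  show "glue_letter F w1 w2 S p = card (set w1) + pack w2 ! (rank S p - 1)"
    using p by (simp add: glue_letter_def)
  show idx: "rank S p - 1 < length w2"
    using sorted_list_nth_rank[OF split_cut_facts(2) p] split_cut_facts(6) by auto
  hence "pack w2 ! (rank S p - 1) \<in> set (pack w2)" by simp
  thus "pack w2 ! (rank S p - 1) \<in> {1..card (set w2)}" by (simp add: set_pack)
qed

lemma set_glue_word: "set (glue_word F w1 w2 S) = {1..card (set w1) + card (set w2)}"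
proof
  let ?T = "{1..fst F} - S" and ?k0 = "card (set w1)"
  have setu: "set (glue_word F w1 w2 S) = glue_letter F w1 w2 S ` {1..fst F}"
    unfolding glue_word_def by (auto simp del: upt_Suc)
  show "set (glue_word F w1 w2 S) \<subseteq> {1..?k0 + card (set w2)}"
  proof
    fix y assume "y \<in> set (glue_word F w1 w2 S)"
    then obtain p where p: "p \<in> {1..fst F}" "y = glue_letter F w1 w2 S p" using setu by auto
    show "y \<in> {1..?k0 + card (set w2)}"
      by (cases "p \<in> S") (use glue_letter_lower(3)[of p] glue_letter_upper(1,3)[of p] p in auto)
  qed
  show "{1..?k0 + card (set w2)} \<subseteq> set (glue_word F w1 w2 S)"
  proof
    fix y assume y: "y \<in> {1..?k0 + card (set w2)}"
    show "y \<in> set (glue_word F w1 w2 S)"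
    proof (cases "y \<le> ?k0")
      case True
      hence "y \<in> set (pack w1)" using y by (simp add: set_pack)
      then obtain j where j: "j < length w1" "pack w1 ! j = y" by (auto simp: in_set_conv_nth)
      let ?p = "sorted_list_of_set ?T ! j"
      have jT: "j < card ?T" using j split_cut_facts(5) by simp
      hence "?p \<in> set (sorted_list_of_set ?T)" by (intro nth_mem) simp
      hence pT: "?p \<in> ?T" by simp
      have "glue_letter F w1 w2 S ?p = y"
        using glue_letter_lower(1)[OF pT] rank_sorted_list_nth[OF _ jT] j by simp
      thus ?thesis using pT setu by auto
    next
      case False
      hence "y - ?k0 \<in> set (pack w2)" using y by (auto simp: set_pack)
      then obtain j where j: "j < length w2" "pack w2 ! j = y - ?k0" by (auto simp: in_set_conv_nth)
      let ?p = "sorted_list_of_set S ! j"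
      have jS: "j < card S" using j split_cut_facts(6) by simp
      hence "?p \<in> set (sorted_list_of_set S)" using split_cut_facts(2) by (intro nth_mem) simp
      hence pS: "?p \<in> S" using split_cut_facts(2) by simp
      have "glue_letter F w1 w2 S ?p = y"
        using glue_letter_upper(1)[OF pS] rank_sorted_list_nth[OF split_cut_facts(2) jS] j False
        by simp
      thus ?thesis using pS split_cut_facts(1) setu by auto
    qed
  qed
qed

lemma glue_word_upper_iff:
  assumes p: "p \<in> {1..fst F}"
  shows "p \<in> S \<longleftrightarrow> card (set w1) < glue_word F w1 w2 S ! (p - 1)"
  unfolding glue_word_nth[OF p]
  by (cases "p \<in> S") (use glue_letter_lower(3)[of p] glue_letter_upper(1,3)[of p] p in auto)

lemma upper_positions_glue_word: "upper_positions F w1 (glue_word F w1 w2 S) = S"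
  using split_cut_facts(1) glue_word_upper_iff unfolding upper_positions_def by blast

text \<open>The glued word increases along every edge of F: inside S and inside its complement
  because w2 and w1 are increasing there, and across the cut because S is closed under
  children, so an edge can only go from the complement (small letters) into S.\<close>
lemma glue_word_forest_word: "glue_word F w1 w2 S \<in> forest_words F"
  unfolding forest_words_def
proof (intro CollectI conjI allI impI)
  show "packed (glue_word F w1 w2 S)" using set_glue_word by (rule packedI)
  show "length (glue_word F w1 w2 S) = fst F" by simp
  let ?T = "{1..fst F} - S" and ?g = "glue_letter F w1 w2 S"
  have finT: "finite ?T" by simp
  fix k l assume e: "snd F l = Some k"
  have kl: "k \<in> {1..fst F}" "l \<in> {1..fst F}"
    using oforest_parents_in_range[OF F] e unfolding parents_in_range_def by blast+
  have "?g k < ?g l"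
  proof (cases "k \<in> S")
    case True
    hence lS: "l \<in> S" using S e by (auto simp: split_cuts_def desc_closed_def)
    have "w2 ! (rank S k - 1) < w2 ! (rank S l - 1)"
      using split_cut_facts(4) True lS e
      unfolding increasing_word_induced_std[OF split_cut_facts(2)] by blast
    thus ?thesis using glue_letter_upper[OF True] glue_letter_upper[OF lS] by (simp add: pack_less_iff)
  next
    case False
    hence kT: "k \<in> ?T" using kl by simp
    show ?thesis
    proof (cases "l \<in> S")
      case True thus ?thesis using glue_letter_lower(3)[OF kT] glue_letter_upper(1,3)[OF True] by auto
    next
      case False
      hence lT: "l \<in> ?T" using kl by simp
      have "w1 ! (rank ?T k - 1) < w1 ! (rank ?T l - 1)"
        using split_cut_facts(3) kT lT e unfolding increasing_word_induced_std[OF finT] by blast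
      thus ?thesis using glue_letter_lower(1,2)[OF kT] glue_letter_lower(1,2)[OF lT]
        by (simp add: pack_less_iff)
    qed
  qed
  thus "glue_word F w1 w2 S ! (k - 1) < glue_word F w1 w2 S ! (l - 1)" using glue_word_nth kl by simp
qed

lemma glue_word_read_along:
  assumes "T = {p\<in>{1..fst F}. P (glue_word F w1 w2 S ! (p-1))}"
  shows "filter P (glue_word F w1 w2 S) = map (\<lambda>p. glue_letter F w1 w2 S p) (sorted_list_of_set T)"
proof -
  have "filter P (glue_word F w1 w2 S)
        = map (\<lambda>p. glue_word F w1 w2 S ! (p-1)) (sorted_list_of_set T)"
    unfolding assms using filter_as_positions[of P "glue_word F w1 w2 S"] by simp
  also have "\<dots> = map (\<lambda>p. glue_letter F w1 w2 S p) (sorted_list_of_set T)"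
  proof (intro map_cong refl)
    fix p assume "p \<in> set (sorted_list_of_set T)"
    hence "p \<in> {1..fst F}" using assms by simp
    thus "glue_word F w1 w2 S ! (p - 1) = glue_letter F w1 w2 S p" by (rule glue_word_nth)
  qed
  finally show ?thesis .
qed

lemma glue_word_restr_lower: "restr (glue_word F w1 w2 S) {1..card (set w1)} = pack w1"
proof -
  let ?u = "glue_word F w1 w2 S" and ?T = "{1..fst F} - S" and ?k0 = "card (set w1)"
  have "\<forall>x\<in>set ?u. 1 \<le> x" using set_glue_word by simp
  hence "restr ?u {1..?k0} = filter (\<lambda>x. x \<le> ?k0) ?u" by (rule restr_lower_filter)
  also have "\<dots> = map (glue_letter F w1 w2 S) (sorted_list_of_set ?T)"
  proof (rule glue_word_read_along)
    show "?T = {p\<in>{1..fst F}. ?u!(p-1) \<le> ?k0}"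
      using glue_word_upper_iff by auto
  qed
  also have "\<dots> = map (\<lambda>p. pack w1 ! (rank ?T p - 1)) (sorted_list_of_set ?T)"
  proof (intro map_cong refl)
    fix p assume "p \<in> set (sorted_list_of_set ?T)"
    hence "p \<in> ?T" by simp
    thus "glue_letter F w1 w2 S p = pack w1 ! (rank ?T p - 1)" by (rule glue_letter_lower(1))
  qed
  also have "\<dots> = pack w1" by (rule map_sorted_list_rank) (simp_all add: split_cut_facts(5))
  finally show ?thesis .
qed

lemma glue_word_restr_upper:
  "pack (restr (glue_word F w1 w2 S) {card (set w1) + 1..card (set w1) + card (set w2)}) = pack w2"
proof -
  let ?u = "glue_word F w1 w2 S" and ?k0 = "card (set w1)"
  have "\<forall>x\<in>set ?u. 1 \<le> x \<and> x \<le> ?k0 + card (set w2)" using set_glue_word by simp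
  hence "restr ?u {?k0 + 1..?k0 + card (set w2)} = filter (\<lambda>x. ?k0 < x) ?u"
    by (rule restr_upper_filter)
  also have "\<dots> = map (glue_letter F w1 w2 S) (sorted_list_of_set S)"
  proof (rule glue_word_read_along)
    show "S = {p\<in>{1..fst F}. ?k0 < ?u!(p-1)}"
      using split_cut_facts(1) glue_word_upper_iff by auto
  qed
  also have "\<dots> = map (\<lambda>x. ?k0 + x) (map (\<lambda>p. pack w2 ! (rank S p - 1)) (sorted_list_of_set S))"
    unfolding map_map comp_def
  proof (intro map_cong refl)
    fix p assume "p \<in> set (sorted_list_of_set S)"
    hence "p \<in> S" using split_cut_facts(2) by simp
    thus "glue_letter F w1 w2 S p = ?k0 + pack w2 ! (rank S p - 1)" by (rule glue_letter_upper(1))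
  qed
  also have "map (\<lambda>p. pack w2 ! (rank S p - 1)) (sorted_list_of_set S) = pack w2"
    by (rule map_sorted_list_rank) (simp_all add: split_cut_facts(2,6))
  finally have "pack (restr ?u {?k0 + 1..?k0 + card (set w2)}) = pack (map (\<lambda>x. ?k0 + x) (pack w2))"
    by simp
  also have "\<dots> = pack w2"
    by (simp add: pack_strict_mono strict_mono_def pack_packed[OF packed_pack])
  finally show ?thesis .
qed

lemma glue_word_split_word: "glue_word F w1 w2 S \<in> split_words F w1 w2"
proof -
  have "\<forall>x\<in>set w1. 1 \<le> x" "\<forall>x\<in>set w2. 1 \<le> x"
    using split_cut_facts(3,4) by (auto simp: increasing_word_def)
  moreover have "card (set (glue_word F w1 w2 S)) = card (set w1) + card (set w2)"
    using set_glue_word by simp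
  ultimately have "in_coprod_support (glue_word F w1 w2 S) w1 w2"
    unfolding in_coprod_support_def using glue_word_restr_lower glue_word_restr_upper by simp
  thus ?thesis using glue_word_forest_word by (simp add: split_words_def)
qed

end

lemma bij_split_words_split_cuts:
  assumes F: "is_oforest F"
  shows "bij_betw (upper_positions F w1) (split_words F w1 w2) (split_cuts F w1 w2)"
proof (rule bij_betw_byWitness[where f' = "glue_word F w1 w2"])
  show "\<forall>u\<in>split_words F w1 w2. glue_word F w1 w2 (upper_positions F w1 u) = u"
    using glue_upper_positions[OF F] by blast
  show "\<forall>S\<in>split_cuts F w1 w2. upper_positions F w1 (glue_word F w1 w2 S) = S"
    using upper_positions_glue_word[OF F] by blast
  show "upper_positions F w1 ` split_words F w1 w2 \<subseteq> split_cuts F w1 w2"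
    using upper_positions_split_cut[OF F] by blast
  show "glue_word F w1 w2 ` split_cuts F w1 w2 \<subseteq> split_words F w1 w2"
    using glue_word_split_word[OF F] by blast
qed

text \<open>The left side of the coproduct identity at (w1, w2) counts split_words: the
  support of pi(S'^F) in the M-basis is forest_words F, with coefficients 1.\<close>
lemma wqsym_coprod_piH_card:
  assumes F: "is_oforest F"
  shows "wqsym_coprod (piH F :: nat list \<Rightarrow> 'k::field) w1 w2 = of_nat (card (split_words F w1 w2))"
proof -
  have range: "parents_in_range F" using F by (rule oforest_parents_in_range)
  note ind = piH_indicator[OF range, where 'k='k]
  have inc: "increasing_word F u" if "u \<in> forest_words F" for u
    using forest_word_increasing[OF range that] .
  have support: "{u. packed u \<and> (piH F u :: 'k) \<noteq> 0} = forest_words F"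
    using ind inc increasing_word_iff_pack[OF range] pack_packed
    by (auto simp: forest_words_def)
  have "wqsym_coprod (piH F :: nat list \<Rightarrow> 'k) w1 w2
        = (\<Sum>u\<in>forest_words F. (piH F u :: 'k) * coprod_M u w1 w2)"
    unfolding wqsym_coprod_def support ..
  also have "\<dots> = (\<Sum>u\<in>forest_words F. if in_coprod_support u w1 w2 then 1 else 0)"
  proof (rule sum.cong)
    fix u assume u: "u \<in> forest_words F"
    hence "packed u" by (simp add: forest_words_def)
    thus "(piH F u :: 'k) * coprod_M u w1 w2 = (if in_coprod_support u w1 w2 then 1 else 0)"
      using ind inc[OF u] coprod_M_indicator[where 'k='k] by simp
  qed simp
  also have "\<dots> = of_nat (card (split_words F w1 w2))"
    unfolding split_words_def by (rule sum_indicator[OF finite_forest_words])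
  finally show ?thesis .
qed

lemma piH_coprod_card:
  assumes F: "is_oforest F"
  shows "(piH_coprod F w1 w2 :: 'k::field) = of_nat (card (split_cuts F w1 w2))"
proof -
  have "(piH_coprod F w1 w2 :: 'k) = (\<Sum>S\<in>desc_closed F.
          (piH (induced_std F ({1..fst F} - S)) w1 :: 'k) * piH (induced_std F S) w2)"
    by (rule piH_coprod_desc_closed[OF F])
  also have "\<dots> = (\<Sum>S\<in>desc_closed F. if increasing_word (induced_std F ({1..fst F} - S)) w1
                            \<and> increasing_word (induced_std F S) w2 then 1 else 0)"
  proof (rule sum.cong)
    fix S assume "S \<in> desc_closed F"
    hence "finite S" by (auto simp: desc_closed_def intro: finite_subset)
    thus "(piH (induced_std F ({1..fst F} - S)) w1 :: 'k) * piH (induced_std F S) w2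
          = (if increasing_word (induced_std F ({1..fst F} - S)) w1
              \<and> increasing_word (induced_std F S) w2 then 1 else 0)"
      by (simp add: piH_indicator[OF parents_in_range_induced_std])
  qed simp
  also have "\<dots> = of_nat (card (split_cuts F w1 w2))"
    unfolding split_cuts_def by (rule sum_indicator[OF finite_desc_closed])
  finally show ?thesis .
qed

text \<open>Compatibility with the coproduct: both sides count sets in bijection.\<close>
theorem coprod_piH:
  assumes F: "is_oforest F"
  shows "wqsym_coprod (piH F :: nat list \<Rightarrow> 'k::field) = piH_coprod F"
proof (intro ext)
  fix w1 w2 :: "nat list"
  show "wqsym_coprod (piH F :: nat list \<Rightarrow> 'k) w1 w2 = piH_coprod F w1 w2"
    unfolding wqsym_coprod_piH_card[OF F] piH_coprod_card[OF F]
      bij_betw_same_card[OF bij_split_words_split_cuts[OF F]] ..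
qed

theorem mainTheorem4:
  shows "(\<forall>F. is_oforest F \<longrightarrow>
            (piH F :: nat list \<Rightarrow> 'k::field) = (\<lambda>w. \<Sum>u\<in>forest_words F. M u w))
       \<and> module.span ser_scale {piH F :: nat list \<Rightarrow> 'k | F. is_oforest F} = WQSym
       \<and> (\<forall>F G. is_oforest F \<longrightarrow> is_oforest G \<longrightarrow>
            (piH (forest_prod F G) :: nat list \<Rightarrow> 'k) = ser_mult (piH F) (piH G))
       \<and> (piH empty_forest :: nat list \<Rightarrow> 'k) = ser_one
       \<and> (\<forall>F. is_oforest F \<longrightarrow>
            wqsym_coprod (piH F :: nat list \<Rightarrow> 'k) = piH_coprod F)
       \<and> (\<forall>F. is_oforest F \<longrightarrow>
            wqsym_counit (piH F :: nat list \<Rightarrow> 'k) = (if fst F = 0 then 1 else 0))"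
  using piH_eq_sum_M span_piH_eq_WQSym piH_forest_prod piH_empty_forest coprod_piH counit_piH
  by blast

end
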